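(* Let $a$ be a real number. The inequality $\Theta_{n,a}(x,y)>0$ holds for all integers $n\ge1$ and all real $x,y\in(0,\pi)$ if and only if $a\ge1$.
   Context: For a real number $a$ and integers $0\le m$, $\binom{m+a}{m}=\frac{(a+1)(a+2)\cdots(a+m)}{m!}$ (equal to $1$ when $m=0$). For an integer $n\ge1$, $\Theta_{n,a}(x,y)=\sum_{j=1}^n\binom{n+a-j}{n-j}\frac{\sin(jx)\sin(jy)}{j}$. *)

theory Defs
  imports Complex_Main
begin

text \<open>binom_a m a = (a+1)(a+2)...(a+m)/m!, the binomial coefficient (m+a choose m) for real a.\<close>
definition binom_a :: "nat \<Rightarrow> real \<Rightarrow> real" where
  "binom_a m a = (\<Prod>i=1..m. a + real i) / fact m"

definition Theta :: "nat \<Rightarrow> real \<Rightarrow> real \<Rightarrow> real \<Rightarrow> real" where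
  "Theta n a x y = (\<Sum>j=1..n. binom_a (n - j) a * sin (real j * x) * sin (real j * y) / real j)"

end

theory Submission
  imports Defs
begin

text \<open>
  Writing \<open>2 sin(jx) sin(jy) = cos(j(x-y)) - cos(j(x+y))\<close> gives
  \<open>\<Theta>\<^sub>n\<^sub>,\<^sub>a(x,y) = (G(x+y) - G(x-y))/2\<close> with
  \<open>G(t) = \<Sum>\<^sub>j binom_a (n-j) a (1 - cos(jt))/j\<close>, an even function symmetric about \<open>\<pi>\<close>
  whose derivative is \<open>S(t) = \<Sum>\<^sub>j binom_a (n-j) a sin(jt)\<close>. Since
  \<open>binom_a m a = \<Sum>\<^sub>k\<^sub>\<le>\<^sub>m binom_a k (a-1)\<close>, two Abel summations write \<open>S\<close> as a combination of
  the iterated sums \<open>F\<^sub>p(t) = \<Sum>\<^sub>m\<^sub>\<le>\<^sub>p \<Sum>\<^sub>j\<^sub>\<le>\<^sub>m sin(jt)\<close> with coefficients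
  \<open>binom_a (n-p) (a-2)\<close>, which are nonnegative for \<open>a \<ge> 1\<close>; and
  \<open>4 sin\<^sup>2(t/2) F\<^sub>p(t) = (p+1) sin t - sin((p+1)t) > 0\<close> on \<open>(0,\<pi>)\<close>.
  Hence \<open>G\<close> increases strictly on \<open>[0,\<pi>]\<close>, and \<open>|x-y|\<close> lies closer to \<open>0\<close> than \<open>x+y\<close> does
  modulo the symmetries of \<open>G\<close>. Conversely, \<open>\<Theta>\<^sub>2\<^sub>,\<^sub>a(x,\<pi>-x) = sin\<^sup>2x (a+1-2cos\<^sup>2x)\<close>, which is
  \<open>\<le> 0\<close> once \<open>cos\<^sup>2x \<ge> (a+1)/2\<close>, possible with \<open>x \<in> (0,\<pi>)\<close> exactly when \<open>a < 1\<close>.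
\<close>

lemma binom_a_0 [simp]: "binom_a 0 a = 1"
  by (simp add: binom_a_def)

lemma binom_a_nonneg:
  assumes "a \<ge> -1"
  shows "binom_a m a \<ge> 0"
  unfolding binom_a_def using assms by (intro divide_nonneg_pos prod_nonneg) auto

lemma binom_a_Suc: "binom_a (Suc m) a = binom_a m a + binom_a (Suc m) (a - 1)"
proof -
  define P where "P = (\<Prod>i=1..m. a + real i)"
  have prod_Suc: "(\<Prod>i=1..Suc m. a + real i) = P * (a + real (Suc m))"
    unfolding P_def by (simp add: prod.nat_ivl_Suc' mult.commute)
  have prod_shift: "(\<Prod>i=1..Suc m. a - 1 + real i) = a * P"
  proof -
    have "(\<Prod>i=1..Suc m. a - 1 + real i) = (\<Prod>i=0..m. a - 1 + real (Suc i))"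
      by (subst prod.shift_bounds_cl_Suc_ivl[symmetric]) simp
    also have "\<dots> = (\<Prod>i=0..m. a + real i)" by simp
    also have "\<dots> = (a + real 0) * (\<Prod>i=Suc 0..m. a + real i)"
      by (rule prod.atLeast_Suc_atMost) simp
    finally show ?thesis unfolding P_def by simp
  qed
  have fact_Suc_real: "fact (Suc m) = real (Suc m) * fact m" by simp
  have "binom_a (Suc m) a = P * (a + real (Suc m)) / (real (Suc m) * fact m)"
    unfolding binom_a_def prod_Suc fact_Suc_real ..
  also have "\<dots> = P / fact m + a * P / (real (Suc m) * fact m)"
    by (simp add: divide_simps) (simp add: algebra_simps)
  also have "\<dots> = binom_a m a + binom_a (Suc m) (a - 1)"
    unfolding binom_a_def prod_shift fact_Suc_real P_def ..
  finally show ?thesis .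
qed

lemma binom_a_eq_sum: "binom_a m a = (\<Sum>k\<le>m. binom_a k (a - 1))"
  by (induction m) (simp_all add: binom_a_Suc[of _ a])

lemma sum_partial_sums_swap:
  fixes b f :: "nat \<Rightarrow> 'a::comm_semiring_0"
  shows "(\<Sum>j=1..n. (\<Sum>k\<le>n-j. b k) * f j) = (\<Sum>m=1..n. b (n-m) * (\<Sum>j=1..m. f j))"
proof -
  have inner: "(\<Sum>k\<le>n-j. b k) = (\<Sum>m=j..n. b (n-m))" if "j \<le> n" for j
    by (rule sum.reindex_bij_witness[of _ "\<lambda>m. n - m" "\<lambda>k. n - k"]) (use that in auto)
  have "(\<Sum>j=1..n. (\<Sum>k\<le>n-j. b k) * f j) = (\<Sum>j\<in>{1..n}. \<Sum>m\<in>{m \<in> {1..n}. j \<le> m}. b (n-m) * f j)"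
  proof (rule sum.cong[OF refl])
    fix j assume "j \<in> {1..n}"
    then have "{m \<in> {1..n}. j \<le> m} = {j..n}" by auto
    with \<open>j \<in> {1..n}\<close> show "(\<Sum>k\<le>n-j. b k) * f j = (\<Sum>m\<in>{m \<in> {1..n}. j \<le> m}. b (n-m) * f j)"
      by (simp add: inner sum_distrib_right)
  qed
  also have "\<dots> = (\<Sum>m\<in>{1..n}. \<Sum>j\<in>{j \<in> {1..n}. j \<le> m}. b (n-m) * f j)"
    by (rule sum.swap_restrict) auto
  also have "\<dots> = (\<Sum>m=1..n. b (n-m) * (\<Sum>j=1..m. f j))"
  proof (rule sum.cong[OF refl])
    fix m assume "m \<in> {1..n}"
    then have "{j \<in> {1..n}. j \<le> m} = {1..m}" by auto
    then show "(\<Sum>j\<in>{j \<in> {1..n}. j \<le> m}. b (n-m) * f j) = b (n-m) * (\<Sum>j=1..m. f j)"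
      by (simp add: sum_distrib_left)
  qed
  finally show ?thesis .
qed

lemma sum_binom_a_Abel:
  "(\<Sum>j=1..n. binom_a (n-j) a * f j) = (\<Sum>m=1..n. binom_a (n-m) (a - 1) * (\<Sum>j=1..m. f j))"
  by (subst binom_a_eq_sum) (rule sum_partial_sums_swap)

definition sin_sum :: "nat \<Rightarrow> real \<Rightarrow> real" where
  "sin_sum m t = (\<Sum>j=1..m. sin (real j * t))"

definition sin_sum_sum :: "nat \<Rightarrow> real \<Rightarrow> real" where
  "sin_sum_sum p t = (\<Sum>m=1..p. sin_sum m t)"

lemma sin_sum_closed_form:
  "2 * sin (t/2) * sin_sum m t = cos (t/2) - cos ((2 * real m + 1) * t / 2)"
proof (induction m)
  case 0
  then show ?case by (simp add: sin_sum_def)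
next
  case (Suc m)
  have telescope: "2 * (sin (t/2) * sin (real (Suc m) * t))
      = cos ((2 * real m + 1) * t / 2) - cos ((2 * real (Suc m) + 1) * t / 2)"
  proof -
    have diff: "t/2 - real (Suc m) * t = - ((2 * real m + 1) * t / 2)"
      and sum: "t/2 + real (Suc m) * t = (2 * real (Suc m) + 1) * t / 2"
      by (simp_all add: algebra_simps)
    show ?thesis unfolding sin_times_sin diff sum by simp
  qed
  have "2 * sin (t/2) * sin_sum (Suc m) t
      = 2 * sin (t/2) * sin_sum m t + 2 * (sin (t/2) * sin (real (Suc m) * t))"
    by (simp add: sin_sum_def algebra_simps)
  then show ?case using Suc telescope by simp
qed

lemma sin_sum_sum_closed_form:
  "4 * sin (t/2)^2 * sin_sum_sum p t = (real p + 1) * sin t - sin ((real p + 1) * t)"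
proof (induction p)
  case 0
  then show ?case by (simp add: sin_sum_sum_def)
next
  case (Suc p)
  have double: "2 * sin (t/2) * cos (t/2) = sin t"
    using sin_double[of "t/2"] by simp
  have telescope: "2 * (sin (t/2) * cos ((2 * real (Suc p) + 1) * t / 2))
      = sin ((real p + 2) * t) - sin ((real p + 1) * t)"
  proof -
    have sum: "t/2 + (2 * real (Suc p) + 1) * t / 2 = (real p + 2) * t"
      and diff: "t/2 - (2 * real (Suc p) + 1) * t / 2 = - ((real p + 1) * t)"
      by (simp_all add: field_simps)
    show ?thesis unfolding sin_times_cos sum diff by simp
  qed
  have "4 * sin (t/2)^2 * sin_sum_sum (Suc p) t
      = 4 * sin (t/2)^2 * sin_sum_sum p t + 2 * sin (t/2) * (2 * sin (t/2) * sin_sum (Suc p) t)"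
    by (simp add: sin_sum_sum_def algebra_simps power2_eq_square)
  also have "2 * sin (t/2) * (2 * sin (t/2) * sin_sum (Suc p) t)
      = sin t - (sin ((real p + 2) * t) - sin ((real p + 1) * t))"
    unfolding sin_sum_closed_form using double telescope by (simp add: algebra_simps)
  finally show ?case using Suc by (simp add: algebra_simps)
qed

lemma abs_sin_Suc_mult_le:
  "\<bar>sin (real (Suc k) * t)\<bar> \<le> \<bar>sin (real k * t)\<bar> * \<bar>cos t\<bar> + \<bar>sin t\<bar>"
proof -
  have "real (Suc k) * t = real k * t + t" by (simp add: algebra_simps)
  then have "\<bar>sin (real (Suc k) * t)\<bar> \<le> \<bar>sin (real k * t)\<bar> * \<bar>cos t\<bar> + \<bar>cos (real k * t)\<bar> * \<bar>sin t\<bar>"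
    by (simp add: sin_add abs_mult abs_triangle_ineq[THEN order_trans])
  also have "\<bar>cos (real k * t)\<bar> * \<bar>sin t\<bar> \<le> \<bar>sin t\<bar>"
    by (simp add: mult_left_le_one_le)
  finally show ?thesis by simp
qed

lemma abs_sin_mult_le: "\<bar>sin (real k * t)\<bar> \<le> real k * \<bar>sin t\<bar>"
proof (induction k)
  case 0
  then show ?case by simp
next
  case (Suc k)
  have "\<bar>sin (real k * t)\<bar> * \<bar>cos t\<bar> \<le> \<bar>sin (real k * t)\<bar>"
    by (rule mult_right_le_one_le) (simp_all add: abs_cos_le_one)
  also have "\<dots> \<le> real k * \<bar>sin t\<bar>" by (rule Suc.IH)
  finally have "\<bar>sin (real k * t)\<bar> * \<bar>cos t\<bar> \<le> real k * \<bar>sin t\<bar>" .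
  then show ?case using abs_sin_Suc_mult_le[of k t] by (simp add: algebra_simps)
qed

lemma abs_sin_mult_less:
  assumes "sin t \<noteq> 0" and "k \<ge> 2"
  shows "\<bar>sin (real k * t)\<bar> < real k * \<bar>sin t\<bar>"
proof -
  obtain l where k: "k = Suc l" and "l \<ge> 1" using assms(2) by (cases k) auto
  have "sin t ^ 2 > 0" using assms(1) by simp
  then have "cos t ^ 2 < 1" using sin_cos_squared_add[of t] by linarith
  then have "\<bar>cos t\<bar> < 1" by (simp add: abs_square_less_1)
  have "real l * \<bar>sin t\<bar> > 0" using assms(1) \<open>l \<ge> 1\<close> by simp
  have "\<bar>sin (real l * t)\<bar> * \<bar>cos t\<bar> \<le> real l * \<bar>sin t\<bar> * \<bar>cos t\<bar>"
    using abs_sin_mult_le[of l t] by (simp add: mult_right_mono)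
  also have "\<dots> < real l * \<bar>sin t\<bar>"
    using mult_strict_left_mono[OF \<open>\<bar>cos t\<bar> < 1\<close> \<open>real l * \<bar>sin t\<bar> > 0\<close>] by simp
  finally have "\<bar>sin (real l * t)\<bar> * \<bar>cos t\<bar> < real l * \<bar>sin t\<bar>" .
  then show ?thesis using abs_sin_Suc_mult_le[of l t] k by (simp add: algebra_simps)
qed

lemma sin_sum_sum_pos:
  assumes "0 < t" "t < pi" "p \<ge> 1"
  shows "sin_sum_sum p t > 0"
proof -
  have "sin t > 0" "sin (t/2) > 0" using assms by (auto intro: sin_gt_zero)
  moreover have "\<bar>sin (real (Suc p) * t)\<bar> < real (Suc p) * \<bar>sin t\<bar>"
    using abs_sin_mult_less[of t "Suc p"] \<open>sin t > 0\<close> assms(3) by auto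
  ultimately have "4 * sin (t/2)^2 * sin_sum_sum p t > 0"
    unfolding sin_sum_sum_closed_form by (simp add: add.commute)
  then show ?thesis using \<open>sin (t/2) > 0\<close> by (simp add: zero_less_mult_iff)
qed

definition sin_poly :: "nat \<Rightarrow> real \<Rightarrow> real \<Rightarrow> real" where
  "sin_poly n a t = (\<Sum>j=1..n. binom_a (n-j) a * sin (real j * t))"

definition versin_poly :: "nat \<Rightarrow> real \<Rightarrow> real \<Rightarrow> real" where
  "versin_poly n a t = (\<Sum>j=1..n. binom_a (n-j) a * (1 - cos (real j * t)) / real j)"

lemma sin_poly_eq_sum_sin_sum_sum:
  "sin_poly n a t = (\<Sum>p=1..n. binom_a (n-p) (a - 2) * sin_sum_sum p t)"
proof -
  have "sin_poly n a t = (\<Sum>m=1..n. binom_a (n-m) (a - 1) * sin_sum m t)"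
    unfolding sin_poly_def sin_sum_def by (rule sum_binom_a_Abel)
  also have "\<dots> = (\<Sum>p=1..n. binom_a (n-p) (a - 1 - 1) * sin_sum_sum p t)"
    unfolding sin_sum_sum_def by (rule sum_binom_a_Abel)
  finally show ?thesis by simp
qed

lemma sin_poly_pos:
  assumes "a \<ge> 1" "n \<ge> 1" "0 < t" "t < pi"
  shows "sin_poly n a t > 0"
proof -
  have "sin_poly n a t = sin_sum_sum n t + (\<Sum>p\<in>{1..n}-{n}. binom_a (n-p) (a - 2) * sin_sum_sum p t)"
    unfolding sin_poly_eq_sum_sin_sum_sum using assms(2) by (subst sum.remove[of _ n]) auto
  moreover have "(\<Sum>p\<in>{1..n}-{n}. binom_a (n-p) (a - 2) * sin_sum_sum p t) \<ge> 0"
    using assms binom_a_nonneg[of "a - 2"] sin_sum_sum_pos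
    by (intro sum_nonneg mult_nonneg_nonneg) (auto intro: less_imp_le)
  moreover have "sin_sum_sum n t > 0" using sin_sum_sum_pos assms by auto
  ultimately show ?thesis by simp
qed

lemma has_field_derivative_versin_poly:
  "(versin_poly n a has_field_derivative sin_poly n a t) (at t)"
  unfolding versin_poly_def[abs_def] sin_poly_def
proof (rule DERIV_sum)
  fix j assume "j \<in> {1..n}"
  then show "((\<lambda>t. binom_a (n-j) a * (1 - cos (real j * t)) / real j) has_field_derivative
      binom_a (n-j) a * sin (real j * t)) (at t)"
    by (auto intro!: derivative_eq_intros simp: field_simps)
qed

lemma versin_poly_minus: "versin_poly n a (- t) = versin_poly n a t"
  unfolding versin_poly_def by simp

lemma versin_poly_2pi_minus: "versin_poly n a (2 * pi - t) = versin_poly n a t"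
proof -
  have "cos (real j * (2 * pi - t)) = cos (real j * t)" for j
  proof -
    have shift: "real j * (2 * pi - t) = 2 * real j * pi - real j * t" by (simp add: algebra_simps)
    show ?thesis unfolding shift cos_diff by simp
  qed
  then show ?thesis unfolding versin_poly_def by simp
qed

lemma versin_poly_strict_mono:
  assumes "a \<ge> 1" "n \<ge> 1" "0 \<le> u" "u < w" "w \<le> pi"
  shows "versin_poly n a u < versin_poly n a w"
proof (rule DERIV_pos_imp_increasing_open[OF assms(4)])
  fix t assume "u < t" "t < w"
  then show "\<exists>y. DERIV (versin_poly n a) t :> y \<and> 0 < y"
    using has_field_derivative_versin_poly sin_poly_pos assms by (intro exI[of _ "sin_poly n a t"]) auto
next
  show "continuous_on {u..w} (versin_poly n a)"
    by (rule DERIV_continuous_on) (rule has_field_derivative_at_within[OF has_field_derivative_versin_poly])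
qed

lemma Theta_eq_versin_poly_diff:
  "Theta n a x y = (versin_poly n a (x + y) - versin_poly n a (x - y)) / 2"
  unfolding Theta_def versin_poly_def sum_subtractf[symmetric] sum_divide_distrib
proof (rule sum.cong[OF refl])
  fix j assume "j \<in> {1..n}"
  have product: "sin (real j * x) * sin (real j * y) = (cos (real j * (x - y)) - cos (real j * (x + y))) / 2"
    unfolding sin_times_sin by (simp add: algebra_simps)
  have "binom_a (n-j) a * sin (real j * x) * sin (real j * y) / real j
      = binom_a (n-j) a * ((cos (real j * (x - y)) - cos (real j * (x + y))) / 2) / real j"
    by (simp only: mult.assoc product)
  also have "\<dots> = (binom_a (n-j) a * (1 - cos (real j * (x + y))) / real j
        - binom_a (n-j) a * (1 - cos (real j * (x - y))) / real j) / 2"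
    using \<open>j \<in> {1..n}\<close> by (simp add: field_simps)
  finally show "binom_a (n-j) a * sin (real j * x) * sin (real j * y) / real j =
      (binom_a (n-j) a * (1 - cos (real j * (x + y))) / real j
        - binom_a (n-j) a * (1 - cos (real j * (x - y))) / real j) / 2" .
qed

lemma Theta_pos:
  assumes "a \<ge> 1" "n \<ge> 1" "0 < x" "x < pi" "0 < y" "y < pi"
  shows "Theta n a x y > 0"
proof -
  define G where "G = versin_poly n a"
  have "G (x - y) = G \<bar>x - y\<bar>"
    unfolding G_def by (cases "x \<ge> y") (auto simp: versin_poly_minus[of n a "y - x", simplified])
  also have "\<dots> < G (x + y)"
  proof (cases "x + y \<le> pi")
    case True
    then show ?thesis using assms unfolding G_def by (intro versin_poly_strict_mono) auto
  next
    case False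
    then have "G \<bar>x - y\<bar> < G (2 * pi - (x + y))"
      using assms unfolding G_def by (intro versin_poly_strict_mono) auto
    then show ?thesis unfolding G_def versin_poly_2pi_minus .
  qed
  finally show ?thesis unfolding Theta_eq_versin_poly_diff G_def by simp
qed

lemma Theta_2: "Theta 2 a x y = (a + 1) * sin x * sin y + sin (2 * x) * sin (2 * y) / 2"
  by (simp add: Theta_def binom_a_def numeral_2_eq_2)

lemma Theta_2_supplementary: "Theta 2 a x (pi - x) = sin x ^ 2 * (a + 1 - 2 * cos x ^ 2)"
proof -
  have "sin (pi - x) = sin x" "cos (pi - x) = - cos x" by simp_all
  then show ?thesis
    unfolding Theta_2 sin_double by (simp add: power2_eq_square algebra_simps)
qed

lemma Theta_2_nonpos_point:
  assumes "a < 1"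
  obtains x where "0 < x" "x < pi" "Theta 2 a x (pi - x) \<le> 0"
proof -
  define r where "r = sqrt (max (1/2) ((a + 3) / 4))"
  have "0 \<le> r" "r < 1" "r ^ 2 = max (1/2) ((a + 3) / 4)"
    using assms by (auto simp: r_def)
  then have "(a + 1) / 2 \<le> r ^ 2" using assms by (simp add: max_def)
  define x where "x = arccos r"
  have "0 < x" "x < pi" "cos x = r"
    using arccos_lt_bounded[of r] \<open>0 \<le> r\<close> \<open>r < 1\<close> by (auto simp: x_def)
  moreover from this have "Theta 2 a x (pi - x) \<le> 0"
    unfolding Theta_2_supplementary using \<open>(a + 1) / 2 \<le> r ^ 2\<close>
    by (intro mult_nonneg_nonpos) auto
  ultimately show thesis using that by blast
qed

theorem theorem3p10:
  fixes a :: real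
  shows "(\<forall>n::nat. \<forall>x y :: real. n \<ge> 1 \<longrightarrow> 0 < x \<longrightarrow> x < pi \<longrightarrow> 0 < y \<longrightarrow> y < pi
            \<longrightarrow> Theta n a x y > 0) \<longleftrightarrow> a \<ge> 1"
proof
  assume pos: "\<forall>n::nat. \<forall>x y :: real. n \<ge> 1 \<longrightarrow> 0 < x \<longrightarrow> x < pi \<longrightarrow> 0 < y \<longrightarrow> y < pi
            \<longrightarrow> Theta n a x y > 0"
  show "a \<ge> 1"
  proof (rule ccontr)
    assume "\<not> a \<ge> 1"
    then obtain x where x: "0 < x" "x < pi" "Theta 2 a x (pi - x) \<le> 0"
      using Theta_2_nonpos_point[of a] by force
    moreover have "Theta 2 a x (pi - x) > 0"
      using pos[rule_format, of 2 x "pi - x"] x by simp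
    ultimately show False by simp
  qed
next
  assume "a \<ge> 1"
  then show "\<forall>n::nat. \<forall>x y :: real. n \<ge> 1 \<longrightarrow> 0 < x \<longrightarrow> x < pi \<longrightarrow> 0 < y \<longrightarrow> y < pi
            \<longrightarrow> Theta n a x y > 0"
    by (simp add: Theta_pos)
qed

end
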